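(* Let $\eta\in(0,1)$. For $N_S>0$, $\xi\in[0,1]$ let $$I(\xi;N_S)=4N_S\left\{\frac{1-\xi}{1-2\eta^2\left(\sqrt{\xi N_S(1+\xi N_S)}-\xi N_S\right)}+\frac{\xi\left[(1-\eta^2)^2+\eta^4\right]}{(1-\eta^2)\left(1+2\xi N_S\eta^2(1-\eta^2)\right)}\right\},$$ and for $\mathcal N_S>0$ and real $M\ge1$ let $\mathcal I(M;\mathcal N_S)=\max_{\xi\in[0,1]}M\,I(\xi;\mathcal N_S/M)$. Let $\bar N_S(\eta)=0$ if $\eta\le1/\sqrt2$, and for $\eta>1/\sqrt2$ let $\bar N_S(\eta)$ be the unique zero on $(0,\infty)$ of $N_S\mapsto\frac{1}{4N_S}\partial_\xi I(\xi;N_S)|_{\xi=1}$. Then there exists $\bar K(\eta)\ge0$ such that for every $\mathcal N_S>\bar K(\eta)$, $M=1$ maximizes $\mathcal I(\cdot;\mathcal N_S)$ over $M\in[1,\infty]$ (with $M=\infty$ understood as the limit $M\to\infty$). Moreover $\bar K(\eta)=0$ for $0<\eta\le1/\sqrt2$, and $\bar K(\eta)\ge\bar N_S(\eta)$ for $\eta>1/\sqrt2$.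
   Context: $I(\xi;N_S)$ is the quantum Fisher information for estimating the transmission $\eta$ of a pure-loss (zero-temperature) bosonic channel using one single-mode pure displaced squeezed probe with mean photon number $N_S$, fraction $\xi$ in squeezing and $1-\xi$ in displacement. With $M$ probes and total photon budget $\mathcal N_S=MN_S$, the total quantum Fisher information is $M\,I(\xi;\mathcal N_S/M)$, with $M$ relaxed to a continuous variable. *)

theory Defs
  imports "HOL-Analysis.Analysis"
begin

definition QFI :: "real \<Rightarrow> real \<Rightarrow> real \<Rightarrow> real" where
  "QFI eta xi N = 4 * N *
     ((1 - xi) / (1 - 2 * eta^2 * (sqrt (xi * N * (1 + xi * N)) - xi * N))
      + xi * ((1 - eta^2)^2 + eta^4) /
        ((1 - eta^2) * (1 + 2 * xi * N * eta^2 * (1 - eta^2))))"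

definition QFI_tot :: "real \<Rightarrow> real \<Rightarrow> real \<Rightarrow> real" where
  "QFI_tot eta M NN = (SUP xi\<in>{0..1}. M * QFI eta xi (NN / M))"

definition dQFI1 :: "real \<Rightarrow> real \<Rightarrow> real" where
  "dQFI1 eta N = deriv (\<lambda>xi. QFI eta xi N) 1 / (4 * N)"

definition Nbar :: "real \<Rightarrow> real" where
  "Nbar eta = (if eta \<le> 1 / sqrt 2 then 0
               else (THE N. N > 0 \<and> dQFI1 eta N = 0))"

end

theory Submission
  imports Defs "HOL-Real_Asymp.Real_Asymp"
begin

text \<open>
  With n = xi N squeezed photons, I(xi; N) = 4 N ((1 - xi) A(n) + xi B(n)), where the displacement
  gain A increases from A(0) = 1 towards 1 / (1 - eta^2) and the squeezing gain B decreases from B(0).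
  For M probes the total is 4 NN times the same mixture at N = NN / M. Putting the whole budget into
  one probe reaches every squeezing level n with the smaller weight n / NN on B: this can only help
  when A(n) >= B(n), and otherwise the mixture is at most B(n) <= B(0). Hence the M-probe optimum is
  at most the larger of the single-probe optimum and 4 NN B(0), and as M tends to infinity it
  converges to 4 NN max(1, B(0)). So one probe is optimal as soon as its optimum reaches 4 NN B(0):
  for eta <= 1/sqrt 2 because B(0) <= 1 = A(0), and for large NN because A(n) tends to
  1 / (1 - eta^2) > B(0).
\<close>

definition mixture :: "(real \<Rightarrow> real) \<Rightarrow> (real \<Rightarrow> real) \<Rightarrow> real \<Rightarrow> real \<Rightarrow> real" where
  "mixture a b xi N = (1 - xi) * a (xi * N) + xi * b (xi * N)"

lemma mixture_0 [simp]: "mixture a b 0 N = a 0"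
  by (simp add: mixture_def)

lemma mixture_1 [simp]: "mixture a b 1 N = b N"
  by (simp add: mixture_def)

lemma mixture_le_max:
  assumes "0 \<le> xi" "xi \<le> 1"
  shows "mixture a b xi N \<le> max (a (xi * N)) (b (xi * N))"
proof -
  have "mixture a b xi N \<le> (1 - xi) * max (a (xi * N)) (b (xi * N)) + xi * max (a (xi * N)) (b (xi * N))"
    unfolding mixture_def using assms by (intro add_mono mult_left_mono) auto
  then show ?thesis by (simp add: algebra_simps)
qed

lemma mixture_le_rescaled:
  assumes "0 < N" "N \<le> N'" "0 \<le> xi" "xi \<le> 1" and b_le: "b (xi * N) \<le> \<beta>"
  shows "mixture a b xi N \<le> max (mixture a b (xi * N / N') N') \<beta>"
proof (cases "b (xi * N) \<le> a (xi * N)")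
  case True
  define xi' where "xi' = xi * N / N'"
  have "xi' \<le> xi"
    using assms by (simp add: xi'_def divide_le_eq mult_left_mono)
  have "mixture a b xi N = a (xi * N) - xi * (a (xi * N) - b (xi * N))"
    by (simp add: mixture_def algebra_simps)
  also have "\<dots> \<le> a (xi * N) - xi' * (a (xi * N) - b (xi * N))"
    using True \<open>xi' \<le> xi\<close> by (simp add: mult_right_mono)
  also have "\<dots> = mixture a b xi' N'"
    using assms by (simp add: mixture_def xi'_def algebra_simps)
  finally show ?thesis by (simp add: xi'_def)
next
  case False
  then show ?thesis using mixture_le_max[OF assms(3,4), of a b N] b_le by simp
qed

lemma sqrt_gap_less_half:
  fixes n :: real
  assumes "0 \<le> n"
  shows "sqrt (n * (1 + n)) - n < 1 / 2"
proof -
  have "sqrt (n * (1 + n)) < sqrt ((n + 1 / 2)\<^sup>2)"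
    by (intro real_sqrt_less_mono) (simp add: power2_eq_square algebra_simps)
  with assms show ?thesis by simp
qed

lemma sqrt_gap_mono:
  fixes m n :: real
  assumes "0 \<le> m" "m \<le> n"
  shows "sqrt (m * (1 + m)) - m \<le> sqrt (n * (1 + n)) - n"
proof -
  define s where "s = sqrt (m * (1 + m))"
  have "s \<le> m + 1 / 2"
    using sqrt_gap_less_half[OF assms(1)] by (simp add: s_def)
  have s_sq: "s\<^sup>2 = m * (1 + m)"
    using assms(1) by (simp add: s_def)
  have "(s + (n - m))\<^sup>2 = s\<^sup>2 + 2 * (n - m) * s + (n - m)\<^sup>2"
    by (simp add: power2_eq_square algebra_simps)
  also have "\<dots> \<le> m * (1 + m) + 2 * (n - m) * (m + 1 / 2) + (n - m)\<^sup>2"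
    using s_sq \<open>s \<le> m + 1 / 2\<close> assms by (simp add: mult_left_mono)
  also have "\<dots> = n * (1 + n)"
    by (simp add: power2_eq_square algebra_simps)
  finally have "s + (n - m) \<le> sqrt (n * (1 + n))"
    by (rule real_le_rsqrt)
  then show ?thesis by (simp add: s_def)
qed

lemma sqrt_gap_nonneg:
  fixes n :: real
  assumes "0 \<le> n"
  shows "0 \<le> sqrt (n * (1 + n)) - n"
  using sqrt_gap_mono[of 0 n] assms by simp

lemma sqrt_gap_tendsto: "((\<lambda>n::real. sqrt (n * (1 + n)) - n) \<longlongrightarrow> 1 / 2) at_top"
  by real_asymp

definition disp_gain :: "real \<Rightarrow> real \<Rightarrow> real" where
  "disp_gain eta n = 1 / (1 - 2 * eta\<^sup>2 * (sqrt (n * (1 + n)) - n))"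

definition sqz_gain :: "real \<Rightarrow> real \<Rightarrow> real" where
  "sqz_gain eta n = ((1 - eta\<^sup>2)\<^sup>2 + eta ^ 4) / ((1 - eta\<^sup>2) * (1 + 2 * n * eta\<^sup>2 * (1 - eta\<^sup>2)))"

abbreviation QFI_rate :: "real \<Rightarrow> real \<Rightarrow> real \<Rightarrow> real" where
  "QFI_rate eta \<equiv> mixture (disp_gain eta) (sqz_gain eta)"

lemma QFI_eq_QFI_rate: "QFI eta xi N = 4 * N * QFI_rate eta xi N"
  by (simp add: QFI_def mixture_def disp_gain_def sqz_gain_def mult_ac)

lemma disp_gain_0 [simp]: "disp_gain eta 0 = 1"
  by (simp add: disp_gain_def)

lemma isCont_disp_gain_0: "isCont (disp_gain eta) 0"
  unfolding disp_gain_def by (intro continuous_intros) simp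

lemma sqz_gain_0: "sqz_gain eta 0 = (1 - 2 * eta\<^sup>2 * (1 - eta\<^sup>2)) / (1 - eta\<^sup>2)"
  by (simp add: sqz_gain_def power2_eq_square power4_eq_xxxx algebra_simps)

lemma QFI_tot_eq_SUP_QFI_rate:
  assumes "0 < M"
  shows "QFI_tot eta M NN = (SUP xi\<in>{0..1}. 4 * NN * QFI_rate eta xi (NN / M))"
  unfolding QFI_tot_def QFI_eq_QFI_rate using assms by simp

lemma QFI_tot_le:
  assumes "0 < M" and "\<And>xi. xi \<in> {0..1} \<Longrightarrow> 4 * NN * QFI_rate eta xi (NN / M) \<le> u"
  shows "QFI_tot eta M NN \<le> u"
  unfolding QFI_tot_eq_SUP_QFI_rate[OF assms(1)] using assms(2) by (intro cSUP_least) auto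

context
  fixes eta :: real
  assumes eta_pos: "0 < eta" and eta_less_1: "eta < 1"
begin

lemma eta_sq_bounds: "0 < eta\<^sup>2" "eta\<^sup>2 < 1"
  using eta_pos eta_less_1 by (auto simp: power_less_one_iff)

lemma disp_gain_mono:
  assumes "0 \<le> m" "m \<le> n"
  shows "disp_gain eta m \<le> disp_gain eta n"
proof -
  have "2 * eta\<^sup>2 * t < 1" if "0 \<le> t" "t < 1 / 2" for t
  proof -
    have "eta\<^sup>2 * t \<le> 1 * t"
      using that eta_sq_bounds by (intro mult_right_mono) auto
    with that show ?thesis by linarith
  qed
  then have "2 * eta\<^sup>2 * (sqrt (n * (1 + n)) - n) < 1"
    using sqrt_gap_nonneg[of n] sqrt_gap_less_half[of n] assms by simp
  moreover have "2 * eta\<^sup>2 * (sqrt (m * (1 + m)) - m) \<le> 2 * eta\<^sup>2 * (sqrt (n * (1 + n)) - n)"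
    using sqrt_gap_mono[OF assms] eta_sq_bounds by simp
  moreover have "0 \<le> 2 * eta\<^sup>2 * (sqrt (m * (1 + m)) - m)"
    using sqrt_gap_nonneg[of m] assms by simp
  ultimately show ?thesis
    unfolding disp_gain_def by (intro divide_left_mono) auto
qed

lemma disp_gain_tendsto: "(disp_gain eta \<longlongrightarrow> 1 / (1 - eta\<^sup>2)) at_top"
proof -
  have "(disp_gain eta \<longlongrightarrow> 1 / (1 - 2 * eta\<^sup>2 * (1 / 2))) at_top"
    unfolding disp_gain_def using eta_sq_bounds by (intro tendsto_intros sqrt_gap_tendsto) auto
  then show ?thesis by simp
qed

lemma sqz_gain_nonneg:
  assumes "0 \<le> n"
  shows "0 \<le> sqz_gain eta n"
  unfolding sqz_gain_def using assms eta_sq_bounds by simp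

lemma sqz_gain_le_sqz_gain_0:
  assumes "0 \<le> n"
  shows "sqz_gain eta n \<le> sqz_gain eta 0"
proof -
  have "0 \<le> n * eta\<^sup>2 * (1 - eta\<^sup>2)"
    using assms eta_sq_bounds by simp
  then show ?thesis
    unfolding sqz_gain_def using eta_sq_bounds
    by (intro divide_left_mono mult_left_mono mult_pos_pos) auto
qed

lemma isCont_sqz_gain_0: "isCont (sqz_gain eta) 0"
  unfolding sqz_gain_def using eta_sq_bounds by (intro continuous_intros) auto

lemma sqz_gain_0_le_1:
  assumes "eta \<le> 1 / sqrt 2"
  shows "sqz_gain eta 0 \<le> 1"
proof -
  have "eta\<^sup>2 \<le> (1 / sqrt 2)\<^sup>2"
    using assms eta_pos by (intro power_mono) auto
  then have "eta\<^sup>2 \<le> 1 / 2"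
    by (simp add: power_divide)
  then have "eta\<^sup>2 * (2 * eta\<^sup>2 - 1) \<le> 0"
    using eta_sq_bounds by (intro mult_nonneg_nonpos) auto
  then have "1 - 2 * eta\<^sup>2 * (1 - eta\<^sup>2) \<le> 1 - eta\<^sup>2"
    by (simp add: algebra_simps)
  then show ?thesis
    using eta_sq_bounds by (simp add: sqz_gain_0)
qed

lemma QFI_rate_le:
  assumes "0 \<le> N" "xi \<in> {0..1}"
  shows "QFI_rate eta xi N \<le> max (disp_gain eta N) (sqz_gain eta 0)"
proof -
  have "0 \<le> xi * N" "xi * N \<le> N"
    using assms by (auto simp: mult_left_le_one_le)
  then show ?thesis
    using assms by (intro order_trans[OF mixture_le_max] max.mono disp_gain_mono sqz_gain_le_sqz_gain_0) auto
qed

lemma QFI_rate_le_rescaled: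
  assumes "0 < N" "N \<le> N'" "xi \<in> {0..1}"
  shows "QFI_rate eta xi N \<le> max (QFI_rate eta (xi * N / N') N') (sqz_gain eta 0)"
  using assms by (intro mixture_le_rescaled sqz_gain_le_sqz_gain_0) auto

lemma QFI_tot_ge:
  assumes "0 < M" "0 \<le> NN" "xi \<in> {0..1}"
  shows "4 * NN * QFI_rate eta xi (NN / M) \<le> QFI_tot eta M NN"
proof -
  have "bdd_above ((\<lambda>xi. 4 * NN * QFI_rate eta xi (NN / M)) ` {0..1})"
    using assms QFI_rate_le
    by (intro bdd_aboveI2[where M = "4 * NN * max (disp_gain eta (NN / M)) (sqz_gain eta 0)"]
        mult_left_mono) auto
  then show ?thesis
    unfolding QFI_tot_eq_SUP_QFI_rate[OF assms(1)] using assms(3) by (rule cSUP_upper[rotated])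
qed

lemma QFI_tot_1_ge:
  assumes "0 \<le> NN"
  shows "4 * NN \<le> QFI_tot eta 1 NN"
  using QFI_tot_ge[of 1 NN 0] assms by simp

lemma QFI_tot_le_max:
  assumes "1 \<le> M" "0 < NN"
  shows "QFI_tot eta M NN \<le> max (QFI_tot eta 1 NN) (4 * NN * sqz_gain eta 0)"
proof (rule QFI_tot_le)
  fix xi :: real
  assume xi: "xi \<in> {0..1}"
  define xi' where "xi' = xi * (NN / M) / NN"
  have "0 < NN / M" "NN / M \<le> NN" "xi' \<in> {0..1}"
    using assms xi by (auto simp: xi'_def divide_le_eq mult_le_one)
  then have "QFI_rate eta xi (NN / M) \<le> max (QFI_rate eta xi' NN) (sqz_gain eta 0)"
    unfolding xi'_def using xi by (intro QFI_rate_le_rescaled)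
  then have "4 * NN * QFI_rate eta xi (NN / M) \<le> 4 * NN * max (QFI_rate eta xi' NN) (sqz_gain eta 0)"
    using assms by (intro mult_left_mono) auto
  also have "\<dots> = max (4 * NN * QFI_rate eta xi' NN) (4 * NN * sqz_gain eta 0)"
    using assms by (simp add: max_mult_distrib_left)
  also have "\<dots> \<le> max (QFI_tot eta 1 NN) (4 * NN * sqz_gain eta 0)"
    using QFI_tot_ge[of 1 NN xi'] \<open>xi' \<in> {0..1}\<close> assms by simp
  finally show "4 * NN * QFI_rate eta xi (NN / M) \<le> max (QFI_tot eta 1 NN) (4 * NN * sqz_gain eta 0)" .
qed (use assms in simp)

lemma QFI_tot_tendsto:
  assumes "0 < NN"
  shows "((\<lambda>M. QFI_tot eta M NN) \<longlongrightarrow> 4 * NN * max 1 (sqz_gain eta 0)) at_top"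
proof (rule tendsto_sandwich)
  have N_lim: "((\<lambda>M. NN / M) \<longlongrightarrow> 0) at_top"
    by real_asymp
  show "eventually (\<lambda>M. 4 * NN * max 1 (sqz_gain eta (NN / M)) \<le> QFI_tot eta M NN) at_top"
    using eventually_gt_at_top[of 0]
  proof eventually_elim
    case (elim M)
    then show ?case
      using QFI_tot_ge[of M NN 0] QFI_tot_ge[of M NN 1] assms by simp
  qed
  show "eventually (\<lambda>M. QFI_tot eta M NN \<le> 4 * NN * max (disp_gain eta (NN / M)) (sqz_gain eta 0)) at_top"
    using eventually_gt_at_top[of 0]
  proof eventually_elim
    case (elim M)
    then show ?case
      using assms by (intro QFI_tot_le mult_left_mono QFI_rate_le) auto
  qed
  show "((\<lambda>M. 4 * NN * max 1 (sqz_gain eta (NN / M))) \<longlongrightarrow> 4 * NN * max 1 (sqz_gain eta 0)) at_top"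
    by (intro tendsto_intros isCont_tendsto_compose[OF isCont_sqz_gain_0 N_lim])
  have "((\<lambda>M. 4 * NN * max (disp_gain eta (NN / M)) (sqz_gain eta 0))
      \<longlongrightarrow> 4 * NN * max (disp_gain eta 0) (sqz_gain eta 0)) at_top"
    by (intro tendsto_intros isCont_tendsto_compose[OF isCont_disp_gain_0 N_lim])
  then show "((\<lambda>M. 4 * NN * max (disp_gain eta (NN / M)) (sqz_gain eta 0))
      \<longlongrightarrow> 4 * NN * max 1 (sqz_gain eta 0)) at_top"
    by simp
qed

lemma single_probe_optimal:
  assumes "0 < NN" "4 * NN * sqz_gain eta 0 \<le> QFI_tot eta 1 NN"
  shows "(\<forall>M \<ge> 1. QFI_tot eta M NN \<le> QFI_tot eta 1 NN) \<and>
    (\<exists>L. ((\<lambda>M. QFI_tot eta M NN) \<longlongrightarrow> L) at_top \<and> L \<le> QFI_tot eta 1 NN)"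
proof -
  have "4 * NN * max 1 (sqz_gain eta 0) \<le> QFI_tot eta 1 NN"
    using assms QFI_tot_1_ge[of NN] by (simp add: max_mult_distrib_left)
  then show ?thesis
    using assms QFI_tot_le_max QFI_tot_tendsto by fastforce
qed

lemma eventually_sqz_gain_0_le_QFI_tot_1:
  "eventually (\<lambda>NN. 4 * NN * sqz_gain eta 0 \<le> QFI_tot eta 1 NN) at_top"
proof -
  define d where "d = eta\<^sup>2 * (1 - eta\<^sup>2)"
  have "d < eta\<^sup>2 * 1"
    unfolding d_def using eta_sq_bounds by (intro mult_strict_left_mono) auto
  then have d: "0 < d" "d < 1"
    using eta_sq_bounds by (simp add: d_def, linarith)
  have "sqz_gain eta 0 = (1 - 2 * d) / (1 - eta\<^sup>2)"
    by (simp add: sqz_gain_0 d_def)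
  then have "sqz_gain eta 0 < (1 - d) * (1 / (1 - eta\<^sup>2))"
    using d eta_sq_bounds by (simp add: divide_strict_right_mono)
  moreover have "((\<lambda>NN. (1 - d) * disp_gain eta (d * NN)) \<longlongrightarrow> (1 - d) * (1 / (1 - eta\<^sup>2))) at_top"
    using filterlim_tendsto_pos_mult_at_top[OF tendsto_const \<open>0 < d\<close> filterlim_ident]
    by (intro tendsto_intros filterlim_compose[OF disp_gain_tendsto])
  ultimately have "eventually (\<lambda>NN. sqz_gain eta 0 < (1 - d) * disp_gain eta (d * NN)) at_top"
    by (rule order_tendstoD(1)[rotated])
  with eventually_ge_at_top[of 0]
  show ?thesis
  proof eventually_elim
    case (elim NN)
    have "(1 - d) * disp_gain eta (d * NN) \<le> QFI_rate eta d NN"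
      using sqz_gain_nonneg[of "d * NN"] d elim by (simp add: mixture_def)
    then have "4 * NN * sqz_gain eta 0 \<le> 4 * NN * QFI_rate eta d NN"
      using elim by (intro mult_left_mono) auto
    also have "\<dots> \<le> QFI_tot eta 1 NN"
      using QFI_tot_ge[of 1 NN d] d elim by simp
    finally show ?case .
  qed
qed

end

theorem proposition6:
  fixes eta :: real
  assumes "0 < eta" and "eta < 1"
  shows "\<exists>K \<ge> 0.
     (\<forall>NN > K.
        (\<forall>M \<ge> 1. QFI_tot eta M NN \<le> QFI_tot eta 1 NN) \<and>
        (\<exists>L. ((\<lambda>M. QFI_tot eta M NN) \<longlongrightarrow> L) at_top \<and> L \<le> QFI_tot eta 1 NN)) \<and>
     (eta \<le> 1 / sqrt 2 \<longrightarrow> K = 0) \<and>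
     (eta > 1 / sqrt 2 \<longrightarrow> K \<ge> Nbar eta)"
proof -
  obtain K0 where K0: "\<And>NN. NN \<ge> K0 \<Longrightarrow> 4 * NN * sqz_gain eta 0 \<le> QFI_tot eta 1 NN"
    using eventually_sqz_gain_0_le_QFI_tot_1[OF assms] by (auto simp: eventually_at_top_linorder)
  \<comment> \<open>The threshold only has to dominate Nbar eta.\<close>
  define K where "K = (if eta \<le> 1 / sqrt 2 then 0 else max (max K0 0) (Nbar eta))"
  have "4 * NN * sqz_gain eta 0 \<le> QFI_tot eta 1 NN" if "NN > K" for NN
  proof (cases "eta \<le> 1 / sqrt 2")
    case True
    then have "4 * NN * sqz_gain eta 0 \<le> 4 * NN"
      using sqz_gain_0_le_1[OF assms] \<open>NN > K\<close> by (simp add: K_def)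
    also have "\<dots> \<le> QFI_tot eta 1 NN"
      using QFI_tot_1_ge[OF assms] True \<open>NN > K\<close> by (simp add: K_def)
    finally show ?thesis .
  next
    case False
    then show ?thesis using K0 \<open>NN > K\<close> by (simp add: K_def)
  qed
  moreover have "0 \<le> K"
    by (simp add: K_def le_max_iff_disj)
  ultimately show ?thesis
    using single_probe_optimal[OF assms] by (intro exI[of _ K]) (auto simp: K_def)
qed

end
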